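(* Let $\mathcal{X}\subseteq\mathbb{R}^n$ and let $f_1,\dots,f_m$ be differentiable objective functions on $\mathcal{X}$. Fix $K\ge1$, a preference vector $\boldsymbol{\lambda}$ with $\lambda_i\ge0$, $\sum_i\lambda_i=1$, $\boldsymbol{z}^*\in\mathbb{R}^m$, and $\mu>0$, $\mu_1,\dots,\mu_m>0$. For $X_K=\{\boldsymbol{x}^{(1)},\dots,\boldsymbol{x}^{(K)}\}\subseteq\mathcal{X}$ define $$g^{(\mathrm{STCH\text{-}Set})}_{\mu,\{\mu_i\}}(X_K\mid\boldsymbol{\lambda})=\mu\log\left(\sum_{i=1}^m\exp\left(\frac{\lambda_i\left(-\mu_i\log\left(\sum_{k=1}^K e^{-f_i(\boldsymbol{x}^{(k)})/\mu_i}\right)-z_i^*\right)}{\mu}\right)\right),$$ viewed as a function of $(\boldsymbol{x}^{(1)},\dots,\boldsymbol{x}^{(K)})$. If there is a solution set $\hat X_K=\{\hat{\boldsymbol{x}}^{(1)},\dots,\hat{\boldsymbol{x}}^{(K)}\}$ such that $\nabla_{\hat{\boldsymbol{x}}^{(k)}}g^{(\mathrm{STCH\text{-}Set})}_{\mu,\{\mu_i\}}(\hat X_K\mid\boldsymbol{\lambda})=\boldsymbol{0}$ for every $k=1,\dots,K$, then every solution in $\hat X_K$ is a Pareto stationary solution of the multi-objective problem $\min_{\boldsymbol{x}\in\mathcal{X}}(f_1(\boldsymbol{x}),\dots,f_m(\boldsymbol{x}))$.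
   Context: A solution $\boldsymbol{x}\in\mathcal{X}$ is Pareto stationary if there exist weights $\alpha_1,\dots,\alpha_m\ge0$ with $\sum_{i=1}^m\alpha_i=1$ such that $\sum_{i=1}^m\alpha_i\nabla f_i(\boldsymbol{x})=\boldsymbol{0}$. *)

theory Defs
  imports "HOL-Analysis.Analysis"
begin

definition stch_set ::
  "(nat \<Rightarrow> 'a \<Rightarrow> real) \<Rightarrow> nat \<Rightarrow> nat \<Rightarrow> real \<Rightarrow> (nat \<Rightarrow> real) \<Rightarrow> (nat \<Rightarrow> real)
    \<Rightarrow> (nat \<Rightarrow> real) \<Rightarrow> (nat \<Rightarrow> 'a) \<Rightarrow> real" where
  "stch_set f m K mu mui lam z x =
     mu * ln (\<Sum>i<m. exp (lam i * (- mui i * ln (\<Sum>k<K. exp (- f i (x k) / mui i)) - z i) / mu))"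

definition pareto_stationary ::
  "('a::real_inner) set \<Rightarrow> (nat \<Rightarrow> 'a \<Rightarrow> real) \<Rightarrow> nat \<Rightarrow> 'a \<Rightarrow> bool" where
  "pareto_stationary X f m x \<longleftrightarrow> x \<in> X \<and>
     (\<exists>\<alpha> G. (\<forall>i<m. \<alpha> i \<ge> 0) \<and> (\<Sum>i<m. \<alpha> i) = 1 \<and>
        (\<forall>i<m. GDERIV (f i) x :> G i) \<and> (\<Sum>i<m. \<alpha> i *\<^sub>R G i) = 0)"

end

theory Submission imports Defs begin

(* The STCH-set scalarization is a smooth maximum (log-sum-exp with parameter mu) of the terms
   lam i * (s i - z i), where s i = -mui i * ln (\<Sum>k. exp (- f i (x k) / mui i)) is itself a
   log-sum-exp, with the negative parameter - mui i, i.e. a smooth minimum of f i over the K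
   solutions. By the chain rule, the gradient in the k-th solution is therefore a combination of
   the gradients of the f i at x k whose coefficients are a softmax weight times lam i times a
   softmin weight: all nonnegative, and positive wherever lam i > 0. If this gradient vanishes,
   normalizing the coefficients exhibits x k as Pareto stationary. *)

lemma differentiable_imp_GDERIV:
  fixes f :: "'a::euclidean_space \<Rightarrow> real"
  assumes "f differentiable (at x)"
  obtains G where "GDERIV f x :> G"
proof -
  obtain D where D: "(f has_derivative D) (at x)"
    using assms unfolding differentiable_def by blast
  have "D = (\<lambda>h. inner h (adjoint D 1))"
    using adjoint_works[OF has_derivative_linear[OF D]] by (simp add: fun_eq_iff)
  with D have "GDERIV f x :> adjoint D 1"
    unfolding gderiv_def by simp
  then show thesis by (rule that)
qed

lemma GDERIV_unique:
  assumes "GDERIV f x :> G" "GDERIV f x :> H"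
  shows "G = H"
proof -
  have "(\<lambda>h. inner h G) = (\<lambda>h. inner h H)"
    using assms unfolding gderiv_def by (rule has_derivative_unique)
  then have "inner (G - H) (G - H) = 0"
    by (simp add: inner_diff_right fun_eq_iff)
  then show ?thesis by simp
qed

lemma GDERIV_sum:
  assumes "\<And>i. i \<in> I \<Longrightarrow> GDERIV (f i) x :> G i"
  shows "GDERIV (\<lambda>y. \<Sum>i\<in>I. f i y) x :> (\<Sum>i\<in>I. G i)"
  using assms unfolding gderiv_def
  by (auto intro!: derivative_eq_intros simp: inner_sum_right)

lemma GDERIV_fun_upd:
  assumes "GDERIV g (x k) :> G"
  shows "GDERIV (\<lambda>y. g ((x(k := y)) j)) (x k) :> (if j = k then G else 0)"
  using assms by (cases "j = k") (simp_all add: GDERIV_const)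

definition log_sum_exp :: "real \<Rightarrow> nat \<Rightarrow> (nat \<Rightarrow> real) \<Rightarrow> real" where
  "log_sum_exp mu n a = mu * ln (\<Sum>i<n. exp (a i / mu))"

definition softmax :: "real \<Rightarrow> nat \<Rightarrow> (nat \<Rightarrow> real) \<Rightarrow> nat \<Rightarrow> real" where
  "softmax mu n a i = exp (a i / mu) / (\<Sum>j<n. exp (a j / mu))"

lemma sum_exp_pos: "i < (n::nat) \<Longrightarrow> 0 < (\<Sum>j<n. exp (a j :: real))"
  by (rule sum_pos2[of _ i]) auto

lemma softmax_pos: "i < (n::nat) \<Longrightarrow> 0 < softmax mu n a i"
  unfolding softmax_def using sum_exp_pos by auto

lemma GDERIV_log_sum_exp:
  assumes "0 < n" "mu \<noteq> 0" "\<And>i. i < n \<Longrightarrow> GDERIV (a i) x :> A i"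
  shows "GDERIV (\<lambda>y. log_sum_exp mu n (\<lambda>i. a i y)) x :>
    (\<Sum>i<n. softmax mu n (\<lambda>i. a i x) i *\<^sub>R A i)"
proof -
  define T where "T = (\<Sum>j<n. exp (a j x / mu))"
  have "T > 0" unfolding T_def using assms(1) by (rule sum_exp_pos)
  have "DERIV (\<lambda>t. exp (t / mu)) (a i x) :> exp (a i x / mu) / mu" for i
    using assms(2) by (auto intro!: derivative_eq_intros)
  then have "GDERIV (\<lambda>y. \<Sum>i<n. exp (a i y / mu)) x :> (\<Sum>i<n. (exp (a i x / mu) / mu) *\<^sub>R A i)"
    using assms(3) by (intro GDERIV_sum GDERIV_DERIV_compose) auto
  moreover have "DERIV (\<lambda>t. mu * ln t) T :> mu / T"
    using \<open>T > 0\<close> by (auto intro!: derivative_eq_intros)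
  ultimately have "GDERIV (\<lambda>y. log_sum_exp mu n (\<lambda>i. a i y)) x :>
      (mu / T) *\<^sub>R (\<Sum>i<n. (exp (a i x / mu) / mu) *\<^sub>R A i)"
    unfolding log_sum_exp_def T_def by (rule GDERIV_DERIV_compose)
  also have "(mu / T) *\<^sub>R (\<Sum>i<n. (exp (a i x / mu) / mu) *\<^sub>R A i)
      = (\<Sum>i<n. softmax mu n (\<lambda>i. a i x) i *\<^sub>R A i)"
    using \<open>mu \<noteq> 0\<close> by (simp add: scaleR_sum_right softmax_def T_def)
  finally show ?thesis .
qed

lemma GDERIV_log_sum_exp_fun_upd:
  assumes "k < n" "mu \<noteq> 0" "GDERIV g (x k) :> G"
  shows "GDERIV (\<lambda>y. log_sum_exp mu n (\<lambda>j. g ((x(k := y)) j))) (x k) :>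
    softmax mu n (\<lambda>j. g (x j)) k *\<^sub>R G"
proof -
  have "0 < n" using assms(1) by simp
  have "GDERIV (\<lambda>y. g ((x(k := y)) j)) (x k) :> (if j = k then G else 0)" for j
    using assms(3) by (rule GDERIV_fun_upd)
  from GDERIV_log_sum_exp[where a = "\<lambda>j y. g ((x(k := y)) j)", OF \<open>0 < n\<close> assms(2) this]
  show ?thesis using assms(1) by (simp add: if_distrib sum.delta cong: if_cong)
qed

lemma stch_set_eq_log_sum_exp:
  "stch_set f m K mu mui lam z x =
    log_sum_exp mu m (\<lambda>i. lam i * (log_sum_exp (- mui i) K (\<lambda>k. f i (x k)) - z i))"
  by (simp add: stch_set_def log_sum_exp_def)

definition stch_set_weight ::
  "(nat \<Rightarrow> 'a \<Rightarrow> real) \<Rightarrow> nat \<Rightarrow> nat \<Rightarrow> real \<Rightarrow> (nat \<Rightarrow> real) \<Rightarrow> (nat \<Rightarrow> real)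
    \<Rightarrow> (nat \<Rightarrow> real) \<Rightarrow> (nat \<Rightarrow> 'a) \<Rightarrow> nat \<Rightarrow> nat \<Rightarrow> real" where
  "stch_set_weight f m K mu mui lam z x k i =
     softmax mu m (\<lambda>i. lam i * (log_sum_exp (- mui i) K (\<lambda>j. f i (x j)) - z i)) i
     * lam i * softmax (- mui i) K (\<lambda>j. f i (x j)) k"

lemma GDERIV_stch_set_fun_upd:
  assumes "k < K" "0 < m" "mu \<noteq> 0" "\<And>i. i < m \<Longrightarrow> mui i \<noteq> 0"
    and "\<And>i. i < m \<Longrightarrow> GDERIV (f i) (x k) :> G i"
  shows "GDERIV (\<lambda>y. stch_set f m K mu mui lam z (x(k := y))) (x k) :>
    (\<Sum>i<m. stch_set_weight f m K mu mui lam z x k i *\<^sub>R G i)"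
proof -
  have "GDERIV (\<lambda>y. lam i * (log_sum_exp (- mui i) K (\<lambda>j. f i ((x(k := y)) j)) - z i)) (x k) :>
      (lam i * softmax (- mui i) K (\<lambda>j. f i (x j)) k) *\<^sub>R G i" if "i < m" for i
    using GDERIV_log_sum_exp_fun_upd[of k K "- mui i" "f i" x "G i", OF assms(1) _ assms(5)[OF that]]
      assms(4)[OF that]
    unfolding gderiv_def by (auto intro!: derivative_eq_intros)
  from GDERIV_log_sum_exp[OF assms(2,3) this] show ?thesis
    by (simp add: stch_set_eq_log_sum_exp stch_set_weight_def mult.assoc)
qed

lemma pareto_stationaryI_nonneg_combination:
  assumes "x \<in> X" "\<And>i. i < m \<Longrightarrow> GDERIV (f i) x :> G i"
    and "\<And>i. i < m \<Longrightarrow> 0 \<le> w i" "i0 < m" "0 < w i0"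
    and "(\<Sum>i<m. w i *\<^sub>R G i) = 0"
  shows "pareto_stationary X f m x"
proof -
  define W where "W = (\<Sum>i<m. w i)"
  have "W > 0" unfolding W_def using assms(3-5) by (intro sum_pos2) auto
  define \<alpha> where "\<alpha> i = w i / W" for i
  have "\<forall>i<m. 0 \<le> \<alpha> i" using assms(3) \<open>W > 0\<close> by (simp add: \<alpha>_def)
  moreover have "(\<Sum>i<m. \<alpha> i) = 1"
    using \<open>W > 0\<close> by (simp add: \<alpha>_def W_def flip: sum_divide_distrib)
  moreover have "(\<Sum>i<m. \<alpha> i *\<^sub>R G i) = 0"
    using assms(6) by (simp add: \<alpha>_def divide_inverse_commute flip: scaleR_scaleR scaleR_sum_right)
  ultimately show ?thesis
    unfolding pareto_stationary_def using assms(1,2) by blast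
qed

theorem theorem4:
  fixes X :: "(real ^ 'n) set"
    and f :: "nat \<Rightarrow> real ^ 'n \<Rightarrow> real"
    and m K :: nat
    and lam z mui :: "nat \<Rightarrow> real"
    and mu :: real
    and xhat :: "nat \<Rightarrow> real ^ 'n"
  assumes diff: "\<forall>i<m. \<forall>x\<in>X. f i differentiable (at x)"
    and K: "K \<ge> 1"
    and lam_nonneg: "\<forall>i<m. lam i \<ge> 0"
    and lam_sum: "(\<Sum>i<m. lam i) = 1"
    and mu_pos: "mu > 0"
    and mui_pos: "\<forall>i<m. mui i > 0"
    and xhat_in: "\<forall>k<K. xhat k \<in> X"
    and stat: "\<forall>k<K. GDERIV (\<lambda>y. stch_set f m K mu mui lam z (xhat(k := y))) (xhat k) :> 0"
  shows "\<forall>k<K. pareto_stationary X f m (xhat k)"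
proof (intro allI impI)
  fix k assume "k < K"
  obtain i0 where i0: "i0 < m" "lam i0 > 0"
    using sum_nonpos[of "{..<m}" lam] lam_sum by (force simp: not_le)
  have "\<exists>G. GDERIV (f i) (xhat k) :> G" if "i < m" for i
    using diff xhat_in \<open>k < K\<close> that by (metis differentiable_imp_GDERIV)
  then obtain G where G: "\<And>i. i < m \<Longrightarrow> GDERIV (f i) (xhat k) :> G i"
    by metis
  let ?w = "stch_set_weight f m K mu mui lam z xhat k"
  have "GDERIV (\<lambda>y. stch_set f m K mu mui lam z (xhat(k := y))) (xhat k) :>
      (\<Sum>i<m. ?w i *\<^sub>R G i)"
    by (rule GDERIV_stch_set_fun_upd[OF \<open>k < K\<close>]) (use i0 mu_pos mui_pos G in auto)
  then have vanish: "(\<Sum>i<m. ?w i *\<^sub>R G i) = 0"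
    using stat \<open>k < K\<close> by (blast intro: GDERIV_unique)
  have nonneg: "0 \<le> ?w i" if "i < m" for i
    unfolding stch_set_weight_def using lam_nonneg that \<open>k < K\<close>
    by (intro mult_nonneg_nonneg less_imp_le[OF softmax_pos]) auto
  have pos: "0 < ?w i0"
    using i0 \<open>k < K\<close> by (simp add: stch_set_weight_def softmax_pos)
  show "pareto_stationary X f m (xhat k)"
    using xhat_in \<open>k < K\<close>
    by (intro pareto_stationaryI_nonneg_combination[OF _ G nonneg i0(1) pos vanish]) auto
qed

end
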